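(* Consider a cellular network with $n$ base stations $\mathcal{N}=\{1,\dots,n\}$, where base station $i$ serves a nonempty set $\mathcal{J}_i$ of users (pairwise disjoint sets), with channel gains $g_{kj}>0$ from base station $k$ to user $j$ and noise power $\sigma^2>0$. For $\mathbf{p}>\mathbf{0}$, $\mathbf{x}\ge\mathbf{0}$, $\mathbf{r}>\mathbf{0}$ define $$\mathrm{SINR}_{ij}(\mathbf{x},\mathbf{p})=\frac{p_i g_{ij}}{\sum_{k\ne i} p_k g_{kj} x_k+\sigma^2},\qquad f_i(\mathbf{x};\mathbf{r},\mathbf{p})=\sum_{j\in\mathcal{J}_i}\frac{r_{ij}}{\log(1+\mathrm{SINR}_{ij}(\mathbf{x},\mathbf{p}))}.$$ Fix a satisfiable rate vector $\mathbf{r}>\mathbf{0}$. If the full load $\mathbf{x}=\mathbf{1}$ is not implementable (for $\mathbf{r}$), then there is no other load $\mathbf{x}\le\mathbf{1}$ with $\mathbf{x}\ne\mathbf{1}$ that is implementable (for $\mathbf{r}$). Consequently, if full load is not implementable for the rate vector $\mathbf{d}_{\min}$, there is no feasible solution for Problem P0: $$\min_{\mathbf{p}>\mathbf{0},\ \mathbf{r}>\mathbf{0},\ \mathbf{0}<\mathbf{x}\le\mathbf{1}} \mathbf{x}^T\mathbf{p}\quad\text{s.t.}\quad \mathbf{x}=\mathbf{f}(\mathbf{x};\mathbf{r},\mathbf{p}),\quad \mathbf{r}\ge\mathbf{d}_{\min},$$ where $\mathbf{d}_{\min}>\mathbf{0}$ is given.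
   Context: Vector inequalities are componentwise; $\log$ is the natural logarithm. A rate vector $\mathbf{r}$ is satisfiable if $\rho(\mathbf{\Lambda}(\mathbf{r}))<1$, where $\rho$ denotes spectral radius and $\mathbf{\Lambda}(\mathbf{r})$ is the $n\times n$ matrix with entries $\lambda_{ii}=0$ and $\lambda_{ik}=\sum_{j\in\mathcal{J}_i} g_{kj}r_{ij}/g_{ij}$ for $i\ne k$. Given a satisfiable $\mathbf{r}$, a load vector $\mathbf{x}>\mathbf{0}$ is implementable if there exists a power vector $\mathbf{p}>\mathbf{0}$ such that $\mathbf{x}=\mathbf{f}(\mathbf{x};\mathbf{r},\mathbf{p})$. *)

theory Defs
  imports Complex_Main "Jordan_Normal_Form.Spectral_Radius"
begin

text \<open>Base stations are indexed by 0..<n; users have an arbitrary type 'u;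
  J i is the user set of station i; g k j is the gain from station k to user j;
  s2 is the noise power sigma^2; vectors are functions nat => real (components i < n);
  rate vectors are functions r i j.\<close>

definition SINR :: "nat \<Rightarrow> (nat \<Rightarrow> 'u \<Rightarrow> real) \<Rightarrow> real \<Rightarrow> (nat \<Rightarrow> real) \<Rightarrow> (nat \<Rightarrow> real)
    \<Rightarrow> nat \<Rightarrow> 'u \<Rightarrow> real" where
  "SINR n g s2 x p i j =
     p i * g i j / ((\<Sum>k\<in>{0..<n} - {i}. p k * g k j * x k) + s2)"

definition load_map :: "nat \<Rightarrow> (nat \<Rightarrow> 'u set) \<Rightarrow> (nat \<Rightarrow> 'u \<Rightarrow> real) \<Rightarrow> real
    \<Rightarrow> (nat \<Rightarrow> real) \<Rightarrow> (nat \<Rightarrow> 'u \<Rightarrow> real) \<Rightarrow> (nat \<Rightarrow> real) \<Rightarrow> nat \<Rightarrow> real" where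
  "load_map n J g s2 x r p i =
     (\<Sum>j\<in>J i. r i j / ln (1 + SINR n g s2 x p i j))"

definition Lambda :: "nat \<Rightarrow> (nat \<Rightarrow> 'u set) \<Rightarrow> (nat \<Rightarrow> 'u \<Rightarrow> real) \<Rightarrow> (nat \<Rightarrow> 'u \<Rightarrow> real)
    \<Rightarrow> complex mat" where
  "Lambda n J g r = mat n n (\<lambda>(i, k). if i = k then 0
      else complex_of_real (\<Sum>j\<in>J i. g k j * r i j / g i j))"

definition satisfiable :: "nat \<Rightarrow> (nat \<Rightarrow> 'u set) \<Rightarrow> (nat \<Rightarrow> 'u \<Rightarrow> real) \<Rightarrow> (nat \<Rightarrow> 'u \<Rightarrow> real)
    \<Rightarrow> bool" where
  "satisfiable n J g r \<longleftrightarrow> spectral_radius (Lambda n J g r) < 1"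

definition implementable :: "nat \<Rightarrow> (nat \<Rightarrow> 'u set) \<Rightarrow> (nat \<Rightarrow> 'u \<Rightarrow> real) \<Rightarrow> real
    \<Rightarrow> (nat \<Rightarrow> 'u \<Rightarrow> real) \<Rightarrow> (nat \<Rightarrow> real) \<Rightarrow> bool" where
  "implementable n J g s2 r x \<longleftrightarrow>
     (\<forall>i<n. 0 < x i) \<and>
     (\<exists>p. (\<forall>i<n. 0 < p i) \<and> (\<forall>i<n. x i = load_map n J g s2 x r p i))"

end

theory Submission
  imports Defs "HOL-Analysis.Convex"
begin

text \<open>If a load \<open>x \<le> 1\<close> is served with powers \<open>p\<close>, then at full load the powers
  \<open>p k * x k\<close> give each SINR of station \<open>i\<close> exactly \<open>x i\<close> times its old value, so by
  concavity of \<open>ln (1 + _)\<close> every station's full load is at most \<open>1\<close>; the same holds for any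
  smaller rate vector. The full-load map is antitone in a station's own power, monotone in the
  others' and sub-homogeneous in the own power. Hence the componentwise infimum of all power vectors
  with loads \<open>\<le> 1\<close> is again such a vector, and minimality forces every load there to equal \<open>1\<close>:
  full load is implementable.\<close>

lemma mult_ln_one_plus_le:
  fixes c a :: real
  assumes "0 \<le> c" "c \<le> 1" "0 \<le> a"
  shows "c * ln (1 + a) \<le> ln (1 + c * a)"
proof -
  have "(1 - c) * ln 1 + c * ln (1 + a) \<le> ln ((1 - c) *\<^sub>R 1 + c *\<^sub>R (1 + a))"
    using concave_onD[OF ln_concave, of c 1 "1 + a"] assms by simp
  moreover have "(1 - c) *\<^sub>R 1 + c *\<^sub>R (1 + a) = 1 + c * a"
    by (simp add: algebra_simps)
  ultimately show ?thesis by (simp only: ln_one mult_zero_right add_0)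
qed

lemma divide_ln_one_plus_mult_le:
  fixes c a r :: real
  assumes "0 < c" "c \<le> 1" "0 < a" "0 \<le> r"
  shows "r / ln (1 + c * a) \<le> r / ln (1 + a) / c"
proof -
  have "0 < c * ln (1 + a)" using assms by simp
  moreover have "c * ln (1 + a) \<le> ln (1 + c * a)" using mult_ln_one_plus_le assms by simp
  moreover have "0 < ln (1 + c * a)" using assms by (intro ln_gt_zero) simp
  ultimately have "r / ln (1 + c * a) \<le> r / (c * ln (1 + a))"
    using assms by (intro divide_left_mono) auto
  then show ?thesis by (simp add: mult.commute)
qed

locale load_response =
  fixes n :: nat and F :: "(nat \<Rightarrow> real) \<Rightarrow> nat \<Rightarrow> real"
  assumes F_pos: "\<lbrakk>\<forall>k<n. 0 < q k; i < n\<rbrakk> \<Longrightarrow> 0 < F q i"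
    and F_mono: "\<lbrakk>\<forall>k<n. 0 < q k; \<forall>k<n. 0 < q' k; q' i \<le> q i; \<forall>k<n. k \<noteq> i \<longrightarrow> q k \<le> q' k;
        i < n\<rbrakk> \<Longrightarrow> F q i \<le> F q' i"
    and F_scale: "\<lbrakk>\<forall>k<n. 0 < q k; 1 \<le> c; i < n\<rbrakk> \<Longrightarrow> F (q(i := q i / c)) i \<le> c * F q i"
    and F_bounded_below: "i < n \<Longrightarrow> \<exists>e>0. \<forall>q. (\<forall>k<n. 0 < q k) \<longrightarrow> F q i \<le> 1 \<longrightarrow> e \<le> q i"
begin

definition feasible :: "(nat \<Rightarrow> real) set" where
  "feasible = {q. (\<forall>k<n. 0 < q k) \<and> (\<forall>i<n. F q i \<le> 1)}"

definition least_feasible :: "nat \<Rightarrow> real" where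
  "least_feasible i = (INF q\<in>feasible. q i)"

lemma bdd_below_feasible: "i < n \<Longrightarrow> bdd_below ((\<lambda>q. q i) ` feasible)"
  unfolding feasible_def bdd_below_def by (auto intro!: exI[of _ 0] less_imp_le)

lemma least_feasible_le: "q \<in> feasible \<Longrightarrow> i < n \<Longrightarrow> least_feasible i \<le> q i"
  unfolding least_feasible_def by (rule cINF_lower[OF bdd_below_feasible])

lemma least_feasible_pos:
  assumes "feasible \<noteq> {}" "i < n"
  shows "0 < least_feasible i"
proof -
  obtain e where "e > 0" and e: "\<forall>q. (\<forall>k<n. 0 < q k) \<longrightarrow> F q i \<le> 1 \<longrightarrow> e \<le> q i"
    using F_bounded_below[OF \<open>i < n\<close>] by blast
  have "e \<le> least_feasible i"
    unfolding least_feasible_def using assms e by (intro cINF_greatest) (auto simp: feasible_def)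
  with \<open>e > 0\<close> show ?thesis by simp
qed

lemma inf_feasible:
  assumes "q \<in> feasible" "q' \<in> feasible"
  shows "inf q q' \<in> feasible"
proof -
  have pos: "\<forall>k<n. 0 < inf q q' k" using assms by (simp add: feasible_def inf_min)
  have "F (inf q q') i \<le> 1" if "i < n" for i
  proof (cases "q i \<le> q' i")
    case True
    then have "F (inf q q') i \<le> F q i"
      using assms pos \<open>i < n\<close> by (intro F_mono) (auto simp: feasible_def inf_min)
    then show ?thesis using assms(1) \<open>i < n\<close> by (force simp: feasible_def)
  next
    case False
    then have "F (inf q q') i \<le> F q' i"
      using assms pos \<open>i < n\<close> by (intro F_mono) (auto simp: feasible_def inf_min)
    then show ?thesis using assms(2) \<open>i < n\<close> by (force simp: feasible_def)
  qed
  with pos show ?thesis by (simp add: feasible_def)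
qed

lemma feasible_near_least:
  assumes "feasible \<noteq> {}" "0 < \<delta>"
  shows "\<exists>m\<in>feasible. \<forall>k<n. m k < least_feasible k * (1 + \<delta>)"
proof -
  have "\<exists>m\<in>feasible. \<forall>k\<in>K. m k < least_feasible k * (1 + \<delta>)"
    if "finite K" "K \<subseteq> {..<n}" for K
    using that
  proof (induction K rule: finite_induct)
    case empty
    then show ?case using assms(1) by blast
  next
    case (insert k K)
    then obtain m where m: "m \<in> feasible" "\<forall>l\<in>K. m l < least_feasible l * (1 + \<delta>)"
      by auto
    have "k < n" using insert by auto
    then have "least_feasible k < least_feasible k * (1 + \<delta>)"
      using least_feasible_pos[OF assms(1)] assms(2) by simp
    then obtain q where q: "q \<in> feasible" "q k < least_feasible k * (1 + \<delta>)"
      unfolding least_feasible_def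
      using cINF_less_iff[OF assms(1) bdd_below_feasible[OF \<open>k < n\<close>]] by auto
    show ?case
      using inf_feasible[OF m(1) q(1)] m(2) q(2) by (intro bexI[of _ "inf m q"]) (auto simp: inf_min)
  qed
  from this[of "{..<n}"] show ?thesis by auto
qed

text \<open>The infimum of the feasible powers is feasible: it is approximated from above within a factor
  \<open>1 + \<delta>\<close> by a feasible point, and sub-homogeneity absorbs that factor.\<close>

lemma least_feasible_feasible:
  assumes "feasible \<noteq> {}"
  shows "least_feasible \<in> feasible"
proof -
  let ?qs = least_feasible
  have qs_pos: "\<forall>k<n. 0 < ?qs k" using least_feasible_pos[OF assms] by simp
  have "F ?qs i \<le> 1" if "i < n" for i
  proof (rule field_le_epsilon)
    fix \<delta> :: real
    assume "0 < \<delta>"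
    then obtain m where m: "m \<in> feasible" "\<forall>k<n. m k < ?qs k * (1 + \<delta>)"
      using feasible_near_least[OF assms] by blast
    have m_pos: "\<forall>k<n. 0 < m k" using m(1) by (simp add: feasible_def)
    have "F ?qs i \<le> F (m(i := m i / (1 + \<delta>))) i"
    proof (rule F_mono)
      show "\<forall>k<n. 0 < (m(i := m i / (1 + \<delta>))) k" using m_pos \<open>0 < \<delta>\<close> by simp
      show "(m(i := m i / (1 + \<delta>))) i \<le> ?qs i"
        using m(2) \<open>i < n\<close> \<open>0 < \<delta>\<close> by (simp add: divide_le_eq mult.commute less_imp_le)
      show "\<forall>k<n. k \<noteq> i \<longrightarrow> ?qs k \<le> (m(i := m i / (1 + \<delta>))) k"
        using least_feasible_le[OF m(1)] by simp
    qed (use qs_pos \<open>i < n\<close> in auto)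
    also have "\<dots> \<le> (1 + \<delta>) * F m i"
      using F_scale[OF m_pos _ \<open>i < n\<close>, of "1 + \<delta>"] \<open>0 < \<delta>\<close> by simp
    also have "\<dots> \<le> 1 + \<delta>"
      using m(1) \<open>i < n\<close> \<open>0 < \<delta>\<close> by (auto simp: feasible_def intro: mult_left_le)
    finally show "F ?qs i \<le> 1 + \<delta>" .
  qed
  with qs_pos show ?thesis by (simp add: feasible_def)
qed

text \<open>If \<open>F q i < 1\<close> at the least feasible point, lowering the \<open>i\<close>-th power by the factor
  \<open>F q i\<close> keeps it feasible, contradicting minimality.\<close>

lemma F_least_feasible_eq_1:
  assumes "feasible \<noteq> {}" "i < n"
  shows "F least_feasible i = 1"
proof (rule ccontr)
  let ?qs = least_feasible
  have qs: "?qs \<in> feasible" by (rule least_feasible_feasible[OF assms(1)])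
  then have qs_pos: "\<forall>k<n. 0 < ?qs k" and qs_le: "\<forall>k<n. F ?qs k \<le> 1"
    by (auto simp: feasible_def)
  assume "F ?qs i \<noteq> 1"
  with qs_le assms(2) have lt: "F ?qs i < 1" by force
  have F_qs_pos: "0 < F ?qs i" using F_pos[OF qs_pos assms(2)] .
  define c where "c = 1 / F ?qs i"
  have "1 < c" using lt F_qs_pos by (simp add: c_def)
  define q where "q = ?qs(i := ?qs i / c)"
  have q_pos: "\<forall>k<n. 0 < q k" using qs_pos \<open>1 < c\<close> by (simp add: q_def)
  have "F q k \<le> 1" if "k < n" for k
  proof (cases "k = i")
    case True
    have "F q i \<le> c * F ?qs i"
      unfolding q_def using F_scale[OF qs_pos _ assms(2), of c] \<open>1 < c\<close> by simp
    also have "\<dots> = 1" using F_qs_pos by (simp add: c_def)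
    finally show ?thesis using True by simp
  next
    case False
    have "F q k \<le> F ?qs k"
    proof (rule F_mono[OF q_pos qs_pos _ _ \<open>k < n\<close>])
      show "\<forall>l<n. l \<noteq> k \<longrightarrow> q l \<le> ?qs l"
        using qs_pos \<open>1 < c\<close> by (auto simp: q_def divide_le_eq less_imp_le)
    qed (use False in \<open>simp_all add: q_def\<close>)
    then show ?thesis using qs_le \<open>k < n\<close> by force
  qed
  with q_pos have "q \<in> feasible" by (simp add: feasible_def)
  then have "?qs i \<le> ?qs i / c" using least_feasible_le assms(2) by (force simp: q_def)
  moreover have "?qs i / c < ?qs i" using \<open>1 < c\<close> qs_pos assms(2) by (simp add: divide_less_eq)
  ultimately show False by simp
qed

theorem ex_power_F_eq_1:
  assumes "q \<in> feasible"
  shows "\<exists>p. (\<forall>i<n. 0 < p i) \<and> (\<forall>i<n. F p i = 1)"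
proof -
  from assms have "feasible \<noteq> {}" by blast
  then show ?thesis
    using least_feasible_feasible F_least_feasible_eq_1 unfolding feasible_def by blast
qed

end

locale network =
  fixes n :: nat and J :: "nat \<Rightarrow> 'u set" and g :: "nat \<Rightarrow> 'u \<Rightarrow> real" and s2 :: real
  assumes J_fin: "i < n \<Longrightarrow> finite (J i)"
    and J_ne: "i < n \<Longrightarrow> J i \<noteq> {}"
    and g_pos: "\<lbrakk>k < n; i < n; j \<in> J i\<rbrakk> \<Longrightarrow> 0 < g k j"
    and s2_pos: "0 < s2"
begin

lemma interference_nonneg:
  assumes "\<forall>k<n. 0 \<le> x k" "\<forall>k<n. 0 \<le> p k" "i < n" "j \<in> J i"
  shows "0 \<le> (\<Sum>k\<in>{0..<n} - {i}. p k * g k j * x k)"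
proof (rule sum_nonneg)
  fix k assume "k \<in> {0..<n} - {i}"
  then have "0 \<le> p k" "0 \<le> g k j" "0 \<le> x k" using assms g_pos[of k i j] by auto
  then show "0 \<le> p k * g k j * x k" by simp
qed

lemma SINR_pos:
  assumes "\<forall>k<n. 0 \<le> x k" "\<forall>k<n. 0 < p k" "i < n" "j \<in> J i"
  shows "0 < SINR n g s2 x p i j"
  using interference_nonneg[of x p i j] assms g_pos s2_pos
  by (simp add: SINR_def less_imp_le)

lemma SINR_le_noise_limited:
  assumes "\<forall>k<n. 0 \<le> x k" "\<forall>k<n. 0 < p k" "i < n" "j \<in> J i"
  shows "SINR n g s2 x p i j \<le> p i * g i j / s2"
proof -
  have "0 \<le> (\<Sum>k\<in>{0..<n} - {i}. p k * g k j * x k)"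
    using interference_nonneg assms by (simp add: less_imp_le)
  moreover have "0 < p i * g i j" using assms g_pos[of i i j] by simp
  ultimately show ?thesis
    using s2_pos unfolding SINR_def by (intro divide_left_mono) auto
qed

lemma SINR_antimono:
  assumes "\<forall>k<n. 0 \<le> x k" "\<forall>k<n. 0 < q k" "q' i \<le> q i" "\<forall>k<n. k \<noteq> i \<longrightarrow> q k \<le> q' k"
    "i < n" "j \<in> J i"
  shows "SINR n g s2 x q' i j \<le> SINR n g s2 x q i j"
proof -
  have "(\<Sum>k\<in>{0..<n} - {i}. q k * g k j * x k) \<le> (\<Sum>k\<in>{0..<n} - {i}. q' k * g k j * x k)"
  proof (rule sum_mono)
    fix k assume "k \<in> {0..<n} - {i}"
    then have "q k \<le> q' k" "0 \<le> g k j" "0 \<le> x k" using assms g_pos[of k i j] by auto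
    then show "q k * g k j * x k \<le> q' k * g k j * x k" by (simp add: mult_right_mono)
  qed
  moreover have "0 \<le> (\<Sum>k\<in>{0..<n} - {i}. q k * g k j * x k)"
    using interference_nonneg assms by (simp add: less_imp_le)
  ultimately show ?thesis
    using assms g_pos[of i i j] s2_pos unfolding SINR_def
    by (intro frac_le) (auto intro!: mult_right_mono less_imp_le)
qed

lemma SINR_scale_own_power:
  "SINR n g s2 x (p(i := p i / c)) i j = SINR n g s2 x p i j / c"
proof -
  have "(\<Sum>k\<in>{0..<n} - {i}. (p(i := p i / c)) k * g k j * x k) = (\<Sum>k\<in>{0..<n} - {i}. p k * g k j * x k)"
    by (rule sum.cong) auto
  then show ?thesis by (simp add: SINR_def)
qed

lemma SINR_full_load_mult:
  "SINR n g s2 (\<lambda>_. 1) (\<lambda>k. p k * x k) i j = x i * SINR n g s2 x p i j"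
proof -
  have "(\<Sum>k\<in>{0..<n} - {i}. p k * x k * g k j * 1) = (\<Sum>k\<in>{0..<n} - {i}. p k * g k j * x k)"
    by (rule sum.cong) (auto simp: mult_ac)
  then show ?thesis by (simp add: SINR_def mult_ac)
qed

lemma load_map_pos:
  assumes "\<forall>k<n. 0 \<le> x k" "\<forall>k<n. 0 < q k" "i < n" "\<forall>j\<in>J i. 0 < d i j"
  shows "0 < load_map n J g s2 x d q i"
  unfolding load_map_def
proof (rule sum_pos)
  fix j assume "j \<in> J i"
  then show "0 < d i j / ln (1 + SINR n g s2 x q i j)"
    using SINR_pos[OF assms(1-3)] assms(4) by (auto intro!: divide_pos_pos ln_gt_zero)
qed (use J_fin J_ne assms(3) in auto)

lemma load_map_antimono:
  assumes "\<forall>k<n. 0 \<le> x k" "\<forall>k<n. 0 < q k" "\<forall>k<n. 0 < q' k" "q' i \<le> q i"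
    "\<forall>k<n. k \<noteq> i \<longrightarrow> q k \<le> q' k" "i < n" "\<forall>j\<in>J i. 0 < d i j"
  shows "load_map n J g s2 x d q i \<le> load_map n J g s2 x d q' i"
  unfolding load_map_def
proof (rule sum_mono)
  fix j assume "j \<in> J i"
  have "0 < SINR n g s2 x q' i j" using SINR_pos assms \<open>j \<in> J i\<close> by blast
  moreover have "SINR n g s2 x q' i j \<le> SINR n g s2 x q i j"
    using SINR_antimono assms \<open>j \<in> J i\<close> by blast
  ultimately show "d i j / ln (1 + SINR n g s2 x q i j) \<le> d i j / ln (1 + SINR n g s2 x q' i j)"
    using assms(7) \<open>j \<in> J i\<close> by (intro divide_left_mono) (auto intro: less_imp_le)
qed

lemma load_map_scale_own_power:
  assumes "\<forall>k<n. 0 \<le> x k" "\<forall>k<n. 0 < q k" "1 \<le> c" "i < n" "\<forall>j\<in>J i. 0 < d i j"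
  shows "load_map n J g s2 x d (q(i := q i / c)) i \<le> c * load_map n J g s2 x d q i"
  unfolding load_map_def sum_distrib_left
proof (rule sum_mono)
  fix j assume "j \<in> J i"
  define a where "a = SINR n g s2 x q i j"
  have "0 < a" unfolding a_def using SINR_pos assms \<open>j \<in> J i\<close> by blast
  then have "d i j / ln (1 + 1 / c * a) \<le> d i j / ln (1 + a) / (1 / c)"
    using assms \<open>j \<in> J i\<close> by (intro divide_ln_one_plus_mult_le) (auto intro: less_imp_le)
  then show "d i j / ln (1 + SINR n g s2 x (q(i := q i / c)) i j) \<le> c * (d i j / ln (1 + SINR n g s2 x q i j))"
    by (simp add: SINR_scale_own_power a_def mult.commute)
qed

text \<open>A single user \<open>j\<close> already forces \<open>d i j \<le> ln (1 + SINR) \<le> ln (1 + q i g i j / s2)\<close>.\<close>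

lemma load_map_le_one_imp_power_ge:
  assumes "\<forall>k<n. 0 \<le> x k" "\<forall>k<n. 0 < q k" "i < n" "\<forall>j\<in>J i. 0 < d i j"
    and "load_map n J g s2 x d q i \<le> 1" "j \<in> J i"
  shows "s2 * (exp (d i j) - 1) / g i j \<le> q i"
proof -
  define a where "a = SINR n g s2 x q i j"
  have "0 < a" unfolding a_def using SINR_pos assms by blast
  have "d i j / ln (1 + a) \<le> load_map n J g s2 x d q i"
    unfolding load_map_def a_def
  proof (rule member_le_sum[OF \<open>j \<in> J i\<close>])
    fix l assume "l \<in> J i - {j}"
    then show "0 \<le> d i l / ln (1 + SINR n g s2 x q i l)"
      using SINR_pos[OF assms(1-3)] assms(4) by (auto intro!: less_imp_le divide_pos_pos ln_gt_zero)
  qed (use J_fin assms(3) in auto)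
  with assms(5) have "d i j / ln (1 + a) \<le> 1" by simp
  with \<open>0 < a\<close> have "d i j \<le> ln (1 + a)" by (simp add: divide_le_eq)
  then have "exp (d i j) \<le> 1 + a" using \<open>0 < a\<close> by (simp add: ln_ge_iff)
  also have "a \<le> q i * g i j / s2" unfolding a_def using SINR_le_noise_limited assms by blast
  finally show ?thesis using s2_pos g_pos[of i i j] assms by (simp add: field_simps)
qed

lemma load_response_load_map:
  assumes "\<forall>k<n. 0 \<le> x k" "\<forall>i<n. \<forall>j\<in>J i. 0 < d i j"
  shows "load_response n (load_map n J g s2 x d)"
proof
  show "0 < load_map n J g s2 x d q i" if "\<forall>k<n. 0 < q k" "i < n" for q i
    using load_map_pos assms that by blast
  show "load_map n J g s2 x d q i \<le> load_map n J g s2 x d q' i"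
    if "\<forall>k<n. 0 < q k" "\<forall>k<n. 0 < q' k" "q' i \<le> q i" "\<forall>k<n. k \<noteq> i \<longrightarrow> q k \<le> q' k" "i < n"
    for q q' i
    using load_map_antimono assms that by blast
  show "load_map n J g s2 x d (q(i := q i / c)) i \<le> c * load_map n J g s2 x d q i"
    if "\<forall>k<n. 0 < q k" "1 \<le> c" "i < n" for q c i
    using load_map_scale_own_power assms that by blast
  show "\<exists>e>0. \<forall>q. (\<forall>k<n. 0 < q k) \<longrightarrow> load_map n J g s2 x d q i \<le> 1 \<longrightarrow> e \<le> q i"
    if "i < n" for i
  proof -
    obtain j where "j \<in> J i" using J_ne \<open>i < n\<close> by blast
    have "0 < s2 * (exp (d i j) - 1) / g i j"
      using s2_pos g_pos[of i i j] assms(2) \<open>i < n\<close> \<open>j \<in> J i\<close> by simp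
    with load_map_le_one_imp_power_ge assms \<open>i < n\<close> \<open>j \<in> J i\<close> show ?thesis by blast
  qed
qed

lemma load_map_full_load_mult_le:
  assumes "\<forall>k<n. 0 < x k" "x i \<le> 1" "\<forall>k<n. 0 < p k" "i < n"
    and "\<forall>j\<in>J i. 0 < d i j \<and> d i j \<le> r i j"
  shows "load_map n J g s2 (\<lambda>_. 1) d (\<lambda>k. p k * x k) i \<le> load_map n J g s2 x r p i / x i"
  unfolding load_map_def sum_divide_distrib
proof (rule sum_mono)
  fix j assume "j \<in> J i"
  define a where "a = SINR n g s2 x p i j"
  have "0 < a" unfolding a_def using SINR_pos assms \<open>j \<in> J i\<close> by (simp add: less_imp_le)
  have "0 < x i" using assms by simp
  have "d i j / ln (1 + x i * a) \<le> r i j / ln (1 + x i * a)"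
    using assms(5) \<open>j \<in> J i\<close> \<open>0 < a\<close> \<open>0 < x i\<close>
    by (intro divide_right_mono) (auto intro!: less_imp_le ln_gt_zero)
  also have "\<dots> \<le> r i j / ln (1 + a) / x i"
    using assms \<open>j \<in> J i\<close> \<open>0 < a\<close> \<open>0 < x i\<close>
    by (intro divide_ln_one_plus_mult_le) (auto intro: less_imp_le)
  finally show "d i j / ln (1 + SINR n g s2 (\<lambda>_. 1) (\<lambda>k. p k * x k) i j) \<le> r i j / ln (1 + SINR n g s2 x p i j) / x i"
    by (simp add: SINR_full_load_mult a_def)
qed

theorem full_load_implementable_if_dominated:
  assumes "\<forall>i<n. \<forall>j\<in>J i. 0 < d i j \<and> d i j \<le> r i j"
    and "\<forall>i<n. 0 < x i \<and> x i \<le> 1" "\<forall>i<n. 0 < p i"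
    and "\<forall>i<n. x i = load_map n J g s2 x r p i"
  shows "implementable n J g s2 d (\<lambda>_. 1)"
proof -
  interpret load_response n "load_map n J g s2 (\<lambda>_. 1) d"
    by (rule load_response_load_map) (use assms(1) in auto)
  have "load_map n J g s2 (\<lambda>_. 1) d (\<lambda>k. p k * x k) i \<le> 1" if "i < n" for i
  proof -
    have "load_map n J g s2 (\<lambda>_. 1) d (\<lambda>k. p k * x k) i \<le> load_map n J g s2 x r p i / x i"
      using assms(1-3) that by (intro load_map_full_load_mult_le) auto
    also have "\<dots> = 1"
    proof -
      have "load_map n J g s2 x r p i = x i" using assms(4) that by metis
      moreover have "0 < x i" using assms(2) that by simp
      ultimately show ?thesis by simp
    qed
    finally show ?thesis .
  qed
  then have "(\<lambda>k. p k * x k) \<in> feasible"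
    using assms(2,3) by (simp add: feasible_def)
  from ex_power_F_eq_1[OF this] show ?thesis
    unfolding implementable_def by auto
qed

end

theorem corollary1:
  fixes n :: nat and J :: "nat \<Rightarrow> 'u set" and g :: "nat \<Rightarrow> 'u \<Rightarrow> real" and s2 :: real
  assumes n_pos: "1 \<le> n"
    and J_fin: "\<And>i. i < n \<Longrightarrow> finite (J i)"
    and J_ne: "\<And>i. i < n \<Longrightarrow> J i \<noteq> {}"
    and J_disj: "\<And>i k. i < n \<Longrightarrow> k < n \<Longrightarrow> i \<noteq> k \<Longrightarrow> J i \<inter> J k = {}"
    and g_pos: "\<And>k i j. k < n \<Longrightarrow> i < n \<Longrightarrow> j \<in> J i \<Longrightarrow> 0 < g k j"
    and s2_pos: "0 < s2"
  shows
    "(\<forall>r. (\<forall>i<n. \<forall>j\<in>J i. 0 < r i j) \<longrightarrow> satisfiable n J g r \<longrightarrow>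
          \<not> implementable n J g s2 r (\<lambda>_. 1) \<longrightarrow>
          (\<forall>x. (\<forall>i<n. x i \<le> 1) \<longrightarrow> (\<exists>i<n. x i \<noteq> 1) \<longrightarrow>
               \<not> implementable n J g s2 r x))
     \<and>
     (\<forall>dmin. (\<forall>i<n. \<forall>j\<in>J i. 0 < dmin i j) \<longrightarrow> satisfiable n J g dmin \<longrightarrow>
          \<not> implementable n J g s2 dmin (\<lambda>_. 1) \<longrightarrow>
          \<not> (\<exists>p r x. (\<forall>i<n. 0 < p i) \<and> (\<forall>i<n. \<forall>j\<in>J i. 0 < r i j \<and> dmin i j \<le> r i j)
                 \<and> (\<forall>i<n. 0 < x i \<and> x i \<le> 1)
                 \<and> (\<forall>i<n. x i = load_map n J g s2 x r p i)))"
proof -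
  interpret network n J g s2
    using J_fin J_ne g_pos s2_pos by unfold_locales
  show ?thesis
  proof (intro conjI allI impI notI)
    fix r x
    assume r_pos: "\<forall>i<n. \<forall>j\<in>J i. 0 < r i j"
      and not_full: "\<not> implementable n J g s2 r (\<lambda>_. 1)"
      and x_le: "\<forall>i<n. x i \<le> 1" and "implementable n J g s2 r x"
    then obtain p where x_pos: "\<forall>i<n. 0 < x i" and p: "\<forall>i<n. 0 < p i"
      and fixed_point: "\<forall>i<n. x i = load_map n J g s2 x r p i"
      unfolding implementable_def by blast
    have "\<forall>i<n. \<forall>j\<in>J i. 0 < r i j \<and> r i j \<le> r i j" using r_pos by simp
    moreover have "\<forall>i<n. 0 < x i \<and> x i \<le> 1" using x_pos x_le by simp
    ultimately have "implementable n J g s2 r (\<lambda>_. 1)"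
      using full_load_implementable_if_dominated p fixed_point by blast
    with not_full show False ..
  next
    fix dmin
    assume "\<forall>i<n. \<forall>j\<in>J i. 0 < dmin i j"
      and not_full: "\<not> implementable n J g s2 dmin (\<lambda>_. 1)"
      and "\<exists>p r x. (\<forall>i<n. 0 < p i) \<and> (\<forall>i<n. \<forall>j\<in>J i. 0 < r i j \<and> dmin i j \<le> r i j)
                 \<and> (\<forall>i<n. 0 < x i \<and> x i \<le> 1) \<and> (\<forall>i<n. x i = load_map n J g s2 x r p i)"
    then obtain p r x where p: "\<forall>i<n. 0 < p i"
      and r: "\<forall>i<n. \<forall>j\<in>J i. 0 < r i j \<and> dmin i j \<le> r i j"
      and x: "\<forall>i<n. 0 < x i \<and> x i \<le> 1" and fixed_point: "\<forall>i<n. x i = load_map n J g s2 x r p i"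
      by blast
    have "\<forall>i<n. \<forall>j\<in>J i. 0 < dmin i j \<and> dmin i j \<le> r i j"
      using \<open>\<forall>i<n. \<forall>j\<in>J i. 0 < dmin i j\<close> r by simp
    from full_load_implementable_if_dominated[OF this x p fixed_point] not_full show False
      by contradiction
  qed
qed

end
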